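(* Let $\mathbf{G}$ be a connected groupoid and let $p:\mathbf{\tilde G}\to\mathbf{G}$, $r:\mathbf{\tilde G}\to\mathbf{\tilde H}$, $q:\mathbf{\tilde H}\to\mathbf{G}$ be connected covering projections with $qr=p$, where $p$ and $r$ are regular. Let $\Gamma=\mathrm{Cov}(\mathbf{\tilde G}/\mathbf{G})$ and $\Pi=\mathrm{Cov}(\mathbf{\tilde G}/\mathbf{\tilde H})$ (so $\Pi\subseteq\Gamma$), both acting on $\mathbf{\tilde G}$, and let $p':\mathbf{\tilde G}\to\mathbf{\tilde G}/\Gamma$ and $r':\mathbf{\tilde G}\to\mathbf{\tilde G}/\Pi$ be the orbit morphisms. Then there is a covering projection $q':\mathbf{\tilde G}/\Pi\to\mathbf{\tilde G}/\Gamma$ with $q'r'=p'$, where $p',r',q'$ are covering projections, and $(\mathbf{\tilde G},p')$ is equivalent to $(\mathbf{\tilde G},p)$, $(\mathbf{\tilde G},r')$ is equivalent to $(\mathbf{\tilde G},r)$, and $(\mathbf{\tilde G}/\Pi,q')$ is equivalent to $(\mathbf{\tilde H},q)$.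
   Context: A groupoid is a small category in which every arrow is invertible; $t(X)$ is the set of arrows with codomain $X$. A groupoid morphism $p:\mathbf{\tilde G}\to\mathbf{G}$ is a covering projection if for every object $\tilde X$ of $\mathbf{\tilde G}$ the restriction $t(\tilde X)\to t(p\tilde X)$ is a bijection; connected if domain and codomain are connected; regular if $p_*\pi(\mathbf{\tilde G},\tilde X)$ is normal in $\pi(\mathbf{G},p\tilde X)$ for every object $\tilde X$ ($\pi(\mathbf{G},X)$ being the group of arrows $X\to X$). $\mathrm{Cov}(\mathbf{\tilde G}/\mathbf{G})$ is the group of groupoid isomorphisms $h$ of $\mathbf{\tilde G}$ with $ph=p$. For a group acting on a groupoid by groupoid morphisms, the orbit groupoid and orbit morphism $o$ are defined by $o(\gamma g)=o(g)$ for all group elements $\gamma$ and arrows $g$, together with the universal property that any groupoid morphism $f$ with $f(\gamma g)=f(g)$ factors uniquely through $o$. Covering groupoids $(\mathbf{\tilde G},p)$ of $\mathbf{G}$ and $(\mathbf{\tilde H},q)$ of $\mathbf{H}$ are equivalent if there are groupoid isomorphisms $\varphi:\mathbf{\tilde H}\to\mathbf{\tilde G}$ and $\psi:\mathbf{H}\to\mathbf{G}$ with $p\varphi=\psi q$. *)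

theory Defs
  imports Main
begin

text \<open>A (small) groupoid: a set of objects, a set of arrows, domain and codomain maps,
  composition (comp g f is "g after f", defined when dom g = cod f), identities and inverses.\<close>

record ('o, 'a) groupoid =
  Obj :: "'o set"
  Arr :: "'a set"
  dom :: "'a \<Rightarrow> 'o"
  cod :: "'a \<Rightarrow> 'o"
  comp :: "'a \<Rightarrow> 'a \<Rightarrow> 'a"
  ide :: "'o \<Rightarrow> 'a"
  inv :: "'a \<Rightarrow> 'a"

definition groupoid :: "('o, 'a) groupoid \<Rightarrow> bool" where
  "groupoid G \<longleftrightarrow>
     (\<forall>g\<in>Arr G. dom G g \<in> Obj G \<and> cod G g \<in> Obj G) \<and>
     (\<forall>g\<in>Arr G. \<forall>f\<in>Arr G. dom G g = cod G f \<longrightarrow>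
        comp G g f \<in> Arr G \<and> dom G (comp G g f) = dom G f \<and> cod G (comp G g f) = cod G g) \<and>
     (\<forall>h\<in>Arr G. \<forall>g\<in>Arr G. \<forall>f\<in>Arr G. dom G h = cod G g \<longrightarrow> dom G g = cod G f \<longrightarrow>
        comp G h (comp G g f) = comp G (comp G h g) f) \<and>
     (\<forall>X\<in>Obj G. ide G X \<in> Arr G \<and> dom G (ide G X) = X \<and> cod G (ide G X) = X) \<and>
     (\<forall>g\<in>Arr G. comp G g (ide G (dom G g)) = g \<and> comp G (ide G (cod G g)) g = g) \<and>
     (\<forall>g\<in>Arr G. inv G g \<in> Arr G \<and> dom G (inv G g) = cod G g \<and> cod G (inv G g) = dom G g \<and>
        comp G (inv G g) g = ide G (dom G g) \<and> comp G g (inv G g) = ide G (cod G g))"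

definition tset :: "('o, 'a) groupoid \<Rightarrow> 'o \<Rightarrow> 'a set" where
  "tset G X = {g \<in> Arr G. cod G g = X}"

definition vertex_group :: "('o, 'a) groupoid \<Rightarrow> 'o \<Rightarrow> 'a set" where
  "vertex_group G X = {g \<in> Arr G. dom G g = X \<and> cod G g = X}"

definition connected_groupoid :: "('o, 'a) groupoid \<Rightarrow> bool" where
  "connected_groupoid G \<longleftrightarrow> groupoid G \<and> Obj G \<noteq> {} \<and>
     (\<forall>X\<in>Obj G. \<forall>Y\<in>Obj G. \<exists>g\<in>Arr G. dom G g = X \<and> cod G g = Y)"

text \<open>A groupoid morphism is a pair (object map, arrow map); it is only relevant on carriers.\<close>
type_synonym ('o1, 'a1, 'o2, 'a2) gmor = "('o1 \<Rightarrow> 'o2) \<times> ('a1 \<Rightarrow> 'a2)"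

definition gmorphism :: "('o1, 'a1) groupoid \<Rightarrow> ('o2, 'a2) groupoid \<Rightarrow> ('o1, 'a1, 'o2, 'a2) gmor \<Rightarrow> bool" where
  "gmorphism G H F \<longleftrightarrow> groupoid G \<and> groupoid H \<and>
     (\<forall>X\<in>Obj G. fst F X \<in> Obj H) \<and>
     (\<forall>g\<in>Arr G. snd F g \<in> Arr H \<and> dom H (snd F g) = fst F (dom G g) \<and> cod H (snd F g) = fst F (cod G g)) \<and>
     (\<forall>g\<in>Arr G. \<forall>f\<in>Arr G. dom G g = cod G f \<longrightarrow> snd F (comp G g f) = comp H (snd F g) (snd F f)) \<and>
     (\<forall>X\<in>Obj G. snd F (ide G X) = ide H (fst F X))"

definition gcomp :: "('o2, 'a2, 'o3, 'a3) gmor \<Rightarrow> ('o1, 'a1, 'o2, 'a2) gmor \<Rightarrow> ('o1, 'a1, 'o3, 'a3) gmor" where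
  "gcomp F E = (fst F \<circ> fst E, snd F \<circ> snd E)"

definition gmor_eq :: "('o1, 'a1) groupoid \<Rightarrow> ('o1, 'a1, 'o2, 'a2) gmor \<Rightarrow> ('o1, 'a1, 'o2, 'a2) gmor \<Rightarrow> bool" where
  "gmor_eq G F E \<longleftrightarrow> (\<forall>X\<in>Obj G. fst F X = fst E X) \<and> (\<forall>g\<in>Arr G. snd F g = snd E g)"

definition giso :: "('o1, 'a1) groupoid \<Rightarrow> ('o2, 'a2) groupoid \<Rightarrow> ('o1, 'a1, 'o2, 'a2) gmor \<Rightarrow> bool" where
  "giso G H F \<longleftrightarrow> gmorphism G H F \<and> bij_betw (fst F) (Obj G) (Obj H) \<and> bij_betw (snd F) (Arr G) (Arr H)"

definition covering_projection :: "('o1, 'a1) groupoid \<Rightarrow> ('o2, 'a2) groupoid \<Rightarrow> ('o1, 'a1, 'o2, 'a2) gmor \<Rightarrow> bool" where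
  "covering_projection Gt G p \<longleftrightarrow> gmorphism Gt G p \<and>
     (\<forall>X\<in>Obj Gt. bij_betw (snd p) (tset Gt X) (tset G (fst p X)))"

definition connected_covering :: "('o1, 'a1) groupoid \<Rightarrow> ('o2, 'a2) groupoid \<Rightarrow> ('o1, 'a1, 'o2, 'a2) gmor \<Rightarrow> bool" where
  "connected_covering Gt G p \<longleftrightarrow> covering_projection Gt G p \<and> connected_groupoid Gt \<and> connected_groupoid G"

text \<open>Normal subgroup of a vertex group (the image of a vertex group is a subgroup automatically).\<close>
definition normal_in :: "('o, 'a) groupoid \<Rightarrow> 'a set \<Rightarrow> 'o \<Rightarrow> bool" where
  "normal_in G N X \<longleftrightarrow> N \<subseteq> vertex_group G X \<and>
     (\<forall>h\<in>vertex_group G X. \<forall>n\<in>N. comp G h (comp G n (inv G h)) \<in> N)"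

definition regular_covering :: "('o1, 'a1) groupoid \<Rightarrow> ('o2, 'a2) groupoid \<Rightarrow> ('o1, 'a1, 'o2, 'a2) gmor \<Rightarrow> bool" where
  "regular_covering Gt G p \<longleftrightarrow> covering_projection Gt G p \<and>
     (\<forall>X\<in>Obj Gt. normal_in G (snd p ` vertex_group Gt X) (fst p X))"

text \<open>Cov(Gt/G): groupoid automorphisms h of Gt with p h = p; canonical representatives
  (identity outside the carriers).\<close>
definition Cov :: "('o1, 'a1) groupoid \<Rightarrow> ('o2, 'a2) groupoid \<Rightarrow> ('o1, 'a1, 'o2, 'a2) gmor \<Rightarrow> ('o1, 'a1, 'o1, 'a1) gmor set" where
  "Cov Gt G p = {h. giso Gt Gt h \<and> gmor_eq Gt (gcomp p h) p \<and>
      (\<forall>X. X \<notin> Obj Gt \<longrightarrow> fst h X = X) \<and> (\<forall>g. g \<notin> Arr Gt \<longrightarrow> snd h g = g)}"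

definition orbit_invariant :: "('o1, 'a1) groupoid \<Rightarrow> ('o1, 'a1, 'o1, 'a1) gmor set \<Rightarrow> ('o2, 'a2) groupoid \<Rightarrow> ('o1, 'a1, 'o2, 'a2) gmor \<Rightarrow> bool" where
  "orbit_invariant Gt \<Gamma> Q f \<longleftrightarrow> gmorphism Gt Q f \<and>
     (\<forall>\<gamma>\<in>\<Gamma>. (\<forall>g\<in>Arr Gt. snd f (snd \<gamma> g) = snd f g) \<and> (\<forall>X\<in>Obj Gt. fst f (fst \<gamma> X) = fst f X))"

text \<open>Universal property of the orbit morphism o : Gt -> Q, with respect to all target groupoids
  whose objects have type 'x and arrows type 'y.\<close>
definition orbit_universal_at ::
  "('o1, 'a1) groupoid \<Rightarrow> ('o1, 'a1, 'o1, 'a1) gmor set \<Rightarrow> ('o2, 'a2) groupoid \<Rightarrow> ('o1, 'a1, 'o2, 'a2) gmor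
     \<Rightarrow> 'x itself \<Rightarrow> 'y itself \<Rightarrow> bool" where
  "orbit_universal_at Gt \<Gamma> Q om _ _ \<longleftrightarrow>
     (\<forall>(K :: ('x, 'y) groupoid) f. orbit_invariant Gt \<Gamma> K f \<longrightarrow>
        (\<exists>f'. gmorphism Q K f' \<and> gmor_eq Gt (gcomp f' om) f \<and>
           (\<forall>f''. gmorphism Q K f'' \<and> gmor_eq Gt (gcomp f'' om) f \<longrightarrow> gmor_eq Q f'' f')))"

definition equivalent_coverings ::
  "('o1, 'a1) groupoid \<Rightarrow> ('o2, 'a2) groupoid \<Rightarrow> ('o1, 'a1, 'o2, 'a2) gmor \<Rightarrow>
   ('o3, 'a3) groupoid \<Rightarrow> ('o4, 'a4) groupoid \<Rightarrow> ('o3, 'a3, 'o4, 'a4) gmor \<Rightarrow> bool" where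
  "equivalent_coverings Gt G p Ht H q \<longleftrightarrow>
     (\<exists>\<phi> \<psi>. giso Ht Gt \<phi> \<and> giso H G \<psi> \<and> gmor_eq Ht (gcomp p \<phi>) (gcomp \<psi> q))"

end

theory Submission
  imports Defs
begin

text \<open>
  For a regular connected covering \<open>p : Gt \<rightarrow> G\<close> the group \<open>Cov(Gt/G)\<close> acts transitively
  on every fibre of \<open>p\<close>: for \<open>X\<close>, \<open>Y\<close> over the same object, lifting the image of an arrow
  ending in \<open>X\<close> to an arrow ending in \<open>Y\<close> defines a covering transformation taking \<open>X\<close> to \<open>Y\<close>;
  it is well defined because normality forces \<open>p\<^sub>*\<pi>(Gt,X) = p\<^sub>*\<pi>(Gt,Y)\<close>.
  Hence a \<open>Cov(Gt/G)\<close>-invariant morphism is constant on the fibres of \<open>p\<close> and factors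
  uniquely through \<open>p\<close>, so \<open>p\<close> is itself an orbit morphism, and every orbit morphism is \<open>p\<close>
  followed by an isomorphism.  Applying this to \<open>p\<close> and \<open>r\<close> yields \<open>p'\<close>, \<open>r'\<close> together with
  isomorphisms \<open>G \<cong> Gt/\<Gamma>\<close> and \<open>Ht \<cong> Gt/\<Pi>\<close>, and \<open>q'\<close> is \<open>q\<close> transported along them.
\<close>

locale gpd =
  fixes G :: "('o, 'a) groupoid"
  assumes groupoid: "groupoid G"
begin

lemma arr_dom[simp]: "g \<in> Arr G \<Longrightarrow> dom G g \<in> Obj G"
  and arr_cod[simp]: "g \<in> Arr G \<Longrightarrow> cod G g \<in> Obj G"
  using groupoid unfolding groupoid_def by auto

lemma comp_arr[simp]: "g \<in> Arr G \<Longrightarrow> f \<in> Arr G \<Longrightarrow> dom G g = cod G f \<Longrightarrow> comp G g f \<in> Arr G"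
  and dom_comp[simp]: "g \<in> Arr G \<Longrightarrow> f \<in> Arr G \<Longrightarrow> dom G g = cod G f \<Longrightarrow> dom G (comp G g f) = dom G f"
  and cod_comp[simp]: "g \<in> Arr G \<Longrightarrow> f \<in> Arr G \<Longrightarrow> dom G g = cod G f \<Longrightarrow> cod G (comp G g f) = cod G g"
  using groupoid unfolding groupoid_def by auto

lemma comp_assoc[simp]:
  "h \<in> Arr G \<Longrightarrow> g \<in> Arr G \<Longrightarrow> f \<in> Arr G \<Longrightarrow> dom G h = cod G g \<Longrightarrow> dom G g = cod G f \<Longrightarrow>
   comp G (comp G h g) f = comp G h (comp G g f)"
  using groupoid unfolding groupoid_def by metis

lemma ide_arr[simp]: "X \<in> Obj G \<Longrightarrow> ide G X \<in> Arr G"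
  and dom_ide[simp]: "X \<in> Obj G \<Longrightarrow> dom G (ide G X) = X"
  and cod_ide[simp]: "X \<in> Obj G \<Longrightarrow> cod G (ide G X) = X"
  using groupoid unfolding groupoid_def by auto

lemma comp_ide_right[simp]: "g \<in> Arr G \<Longrightarrow> X = dom G g \<Longrightarrow> comp G g (ide G X) = g"
  and comp_ide_left[simp]: "g \<in> Arr G \<Longrightarrow> X = cod G g \<Longrightarrow> comp G (ide G X) g = g"
  using groupoid unfolding groupoid_def by auto

lemma inv_arr[simp]: "g \<in> Arr G \<Longrightarrow> inv G g \<in> Arr G"
  and dom_inv[simp]: "g \<in> Arr G \<Longrightarrow> dom G (inv G g) = cod G g"
  and cod_inv[simp]: "g \<in> Arr G \<Longrightarrow> cod G (inv G g) = dom G g"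
  and comp_inv_arr[simp]: "g \<in> Arr G \<Longrightarrow> comp G (inv G g) g = ide G (dom G g)"
  and comp_arr_inv[simp]: "g \<in> Arr G \<Longrightarrow> comp G g (inv G g) = ide G (cod G g)"
  using groupoid unfolding groupoid_def by auto

lemma comp_inv_comp_cancel[simp]:
  assumes "g \<in> Arr G" "f \<in> Arr G" "cod G f = dom G g"
  shows "comp G (inv G g) (comp G g f) = f"
proof -
  have "comp G (inv G g) (comp G g f) = comp G (comp G (inv G g) g) f"
    using assms by (subst comp_assoc) simp_all
  then show ?thesis using assms by simp
qed

lemma inv_unique:
  assumes "x \<in> Arr G" "g \<in> Arr G" "dom G x = cod G g" "comp G x g = ide G (dom G g)"
  shows "x = inv G g"
proof -
  have "x = comp G x (comp G g (inv G g))" using assms by simp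
  also have "\<dots> = comp G (comp G x g) (inv G g)" using assms by (subst comp_assoc) simp_all
  also have "\<dots> = inv G g" using assms by simp
  finally show ?thesis .
qed

lemma inv_inv[simp]: "g \<in> Arr G \<Longrightarrow> inv G (inv G g) = g"
  by (metis inv_unique inv_arr dom_inv cod_inv comp_arr_inv)

end

locale gpd_hom =
  fixes G :: "('o1, 'a1) groupoid" and H :: "('o2, 'a2) groupoid"
    and F :: "('o1, 'a1, 'o2, 'a2) gmor"
  assumes gmorphism: "gmorphism G H F"
begin

sublocale S: gpd G using gmorphism unfolding gmorphism_def gpd_def by auto
sublocale T: gpd H using gmorphism unfolding gmorphism_def gpd_def by auto

lemma map_obj[simp]: "X \<in> Obj G \<Longrightarrow> fst F X \<in> Obj H"
  and map_arr[simp]: "g \<in> Arr G \<Longrightarrow> snd F g \<in> Arr H"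
  and map_dom[simp]: "g \<in> Arr G \<Longrightarrow> dom H (snd F g) = fst F (dom G g)"
  and map_cod[simp]: "g \<in> Arr G \<Longrightarrow> cod H (snd F g) = fst F (cod G g)"
  and map_comp[simp]:
    "g \<in> Arr G \<Longrightarrow> f \<in> Arr G \<Longrightarrow> dom G g = cod G f \<Longrightarrow> snd F (comp G g f) = comp H (snd F g) (snd F f)"
  and map_ide[simp]: "X \<in> Obj G \<Longrightarrow> snd F (ide G X) = ide H (fst F X)"
  using gmorphism unfolding gmorphism_def by auto

lemma map_inv[simp]: "g \<in> Arr G \<Longrightarrow> snd F (inv G g) = inv H (snd F g)"
proof -
  assume g: "g \<in> Arr G"
  have "comp H (snd F (inv G g)) (snd F g) = ide H (dom H (snd F g))"
    using g by (simp flip: map_comp)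
  then show ?thesis using g by (intro T.inv_unique) simp_all
qed

end

lemma gmorphism_gcomp: "gmorphism G H F \<Longrightarrow> gmorphism H K E \<Longrightarrow> gmorphism G K (gcomp E F)"
  unfolding gmorphism_def gcomp_def by auto

lemma gmorphism_id: "groupoid G \<Longrightarrow> gmorphism G G (id, id)"
  unfolding gmorphism_def by auto

lemma giso_id: "groupoid G \<Longrightarrow> giso G G (id, id)"
  unfolding giso_def using gmorphism_id by auto

definition inverse_gmors ::
  "('o1, 'a1) groupoid \<Rightarrow> ('o2, 'a2) groupoid \<Rightarrow> ('o1, 'a1, 'o2, 'a2) gmor \<Rightarrow> ('o2, 'a2, 'o1, 'a1) gmor \<Rightarrow> bool"
  where "inverse_gmors G H u v \<longleftrightarrow> gmorphism G H u \<and> gmorphism H G v \<and>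
     gmor_eq G (gcomp v u) (id, id) \<and> gmor_eq H (gcomp u v) (id, id)"

lemma inverse_gmors_sym: "inverse_gmors G H u v \<Longrightarrow> inverse_gmors H G v u"
  unfolding inverse_gmors_def by blast

lemma inverse_gmors_giso:
  assumes "inverse_gmors G H u v"
  shows "giso G H u"
proof -
  interpret U: gpd_hom G H u using assms unfolding inverse_gmors_def gpd_hom_def by blast
  interpret V: gpd_hom H G v using assms unfolding inverse_gmors_def gpd_hom_def by blast
  have vu: "\<And>X. X \<in> Obj G \<Longrightarrow> fst v (fst u X) = X" "\<And>g. g \<in> Arr G \<Longrightarrow> snd v (snd u g) = g"
    and uv: "\<And>X. X \<in> Obj H \<Longrightarrow> fst u (fst v X) = X" "\<And>g. g \<in> Arr H \<Longrightarrow> snd u (snd v g) = g"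
    using assms unfolding inverse_gmors_def gmor_eq_def gcomp_def by auto
  have "bij_betw (fst u) (Obj G) (Obj H)"
    by (rule bij_betw_byWitness[where f' = "fst v"]) (use vu uv in auto)
  moreover have "bij_betw (snd u) (Arr G) (Arr H)"
    by (rule bij_betw_byWitness[where f' = "snd v"]) (use vu uv in auto)
  ultimately show ?thesis unfolding giso_def using U.gmorphism by blast
qed

lemma giso_covering_projection:
  assumes "giso G H u"
  shows "covering_projection G H u"
proof -
  have gm: "gmorphism G H u" and bij_obj: "bij_betw (fst u) (Obj G) (Obj H)"
    and bij_arr: "bij_betw (snd u) (Arr G) (Arr H)"
    using assms unfolding giso_def by auto
  interpret U: gpd_hom G H u by (rule gpd_hom.intro[OF gm])
  have "bij_betw (snd u) (tset G X) (tset H (fst u X))" if X: "X \<in> Obj G" for X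
    unfolding bij_betw_def
  proof
    show "inj_on (snd u) (tset G X)"
      using bij_arr unfolding bij_betw_def tset_def by (auto intro: inj_on_subset)
    show "snd u ` tset G X = tset H (fst u X)"
    proof
      show "snd u ` tset G X \<subseteq> tset H (fst u X)" unfolding tset_def by auto
      show "tset H (fst u X) \<subseteq> snd u ` tset G X"
      proof
        fix k assume k: "k \<in> tset H (fst u X)"
        then obtain g where g: "g \<in> Arr G" "k = snd u g"
          using bij_arr unfolding tset_def bij_betw_def by auto
        then have "fst u (cod G g) = fst u X" using k unfolding tset_def by auto
        then have "cod G g = X" using bij_obj X g(1) unfolding bij_betw_def inj_on_def by auto
        then show "k \<in> snd u ` tset G X" using g unfolding tset_def by auto
      qed
    qed
  qed
  then show ?thesis using gm unfolding covering_projection_def by auto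
qed

lemma covering_projection_gcomp:
  assumes f: "covering_projection A B f" and g: "covering_projection B C g"
  shows "covering_projection A C (gcomp g f)"
proof -
  have "bij_betw (snd g \<circ> snd f) (tset A X) (tset C (fst g (fst f X)))" if X: "X \<in> Obj A" for X
  proof (rule bij_betw_trans)
    show "bij_betw (snd f) (tset A X) (tset B (fst f X))" using f X unfolding covering_projection_def by blast
    show "bij_betw (snd g) (tset B (fst f X)) (tset C (fst g (fst f X)))"
      using f g X unfolding covering_projection_def gmorphism_def by blast
  qed
  then show ?thesis
    using f g gmorphism_gcomp[of A B f C g] unfolding covering_projection_def by (simp add: gcomp_def)
qed

lemma covering_projection_cong:
  assumes f: "covering_projection A B f" and g: "gmorphism A B f'" and eq: "gmor_eq A f f'"
  shows "covering_projection A B f'"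
proof -
  have "bij_betw (snd f') (tset A X) (tset B (fst f' X))" if X: "X \<in> Obj A" for X
  proof -
    have "bij_betw (snd f) (tset A X) (tset B (fst f X))"
      using f X unfolding covering_projection_def by blast
    moreover have "\<And>a. a \<in> tset A X \<Longrightarrow> snd f a = snd f' a" and "fst f X = fst f' X"
      using eq X by (auto simp: gmor_eq_def tset_def)
    ultimately show ?thesis using bij_betw_cong[of "tset A X" "snd f" "snd f'"] by simp
  qed
  then show ?thesis using g unfolding covering_projection_def by auto
qed

locale covering =
  fixes Gt :: "('ot, 'at) groupoid" and G :: "('o, 'a) groupoid" and p :: "('ot, 'at, 'o, 'a) gmor"
  assumes covering_projection: "covering_projection Gt G p"
begin

sublocale gpd_hom Gt G p
  using covering_projection unfolding covering_projection_def gpd_hom_def by auto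

lemma lift_unique:
  "a \<in> Arr Gt \<Longrightarrow> b \<in> Arr Gt \<Longrightarrow> cod Gt a = cod Gt b \<Longrightarrow> snd p a = snd p b \<Longrightarrow> a = b"
  using covering_projection unfolding covering_projection_def bij_betw_def inj_on_def tset_def
  by (metis (mono_tags, lifting) S.arr_cod mem_Collect_eq)

lemma lift_exists:
  assumes "Y \<in> Obj Gt" "g \<in> Arr G" "cod G g = fst p Y"
  shows "\<exists>a. a \<in> Arr Gt \<and> cod Gt a = Y \<and> snd p a = g"
proof -
  have "g \<in> snd p ` tset Gt Y"
    using assms covering_projection unfolding covering_projection_def bij_betw_def tset_def by simp
  then show ?thesis unfolding tset_def by blast
qed

definition lift :: "'a \<Rightarrow> 'ot \<Rightarrow> 'at"
  where "lift g Y = (SOME a. a \<in> Arr Gt \<and> cod Gt a = Y \<and> snd p a = g)"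

lemma lift:
  assumes "Y \<in> Obj Gt" "g \<in> Arr G" "cod G g = fst p Y"
  shows "lift g Y \<in> Arr Gt" "cod Gt (lift g Y) = Y" "snd p (lift g Y) = g"
  using someI_ex[OF lift_exists[OF assms]] unfolding lift_def by auto

lemma lift_dom:
  assumes "Y \<in> Obj Gt" "g \<in> Arr G" "cod G g = fst p Y"
  shows "fst p (dom Gt (lift g Y)) = dom G g"
  using lift[OF assms] map_dom by metis

lemma lift_eqI:
  assumes "a \<in> Arr Gt" "cod Gt a = Y" "snd p a = g"
  shows "lift g Y = a"
  using assms lift[of Y g] by (intro lift_unique) auto

lemma lift_ide: "Y \<in> Obj Gt \<Longrightarrow> lift (ide G (fst p Y)) Y = ide Gt Y"
  by (rule lift_eqI) auto

lemma lift_comp: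
  assumes Y: "Y \<in> Obj Gt" and gf: "g \<in> Arr G" "f \<in> Arr G" "dom G g = cod G f" and g: "cod G g = fst p Y"
  shows "lift (comp G g f) Y = comp Gt (lift g Y) (lift f (dom Gt (lift g Y)))"
proof -
  have f: "cod G f = fst p (dom Gt (lift g Y))" using lift_dom[OF Y gf(1) g] gf by simp
  show ?thesis using lift[OF Y gf(1) g] lift[OF _ gf(2) f] gf g by (intro lift_eqI) simp_all
qed

lemma equivalent_covering_if_base_iso:
  assumes u: "giso G Q u" and om: "gmorphism Gt Q om" and eq: "gmor_eq Gt (gcomp u p) om"
  shows "covering_projection Gt Q om" "equivalent_coverings Gt Q om Gt G p"
proof -
  show "covering_projection Gt Q om"
    using covering_projection_gcomp[OF covering_projection giso_covering_projection[OF u]] om eq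
    by (rule covering_projection_cong)
  have "gmor_eq Gt (gcomp om (id, id)) (gcomp u p)" using eq unfolding gmor_eq_def gcomp_def by simp
  then show "equivalent_coverings Gt Q om Gt G p"
    unfolding equivalent_coverings_def using giso_id[OF S.groupoid] u by blast
qed

definition fibrewise_constant :: "('ot, 'at, 'x, 'y) gmor \<Rightarrow> bool"
  where "fibrewise_constant f \<longleftrightarrow>
    (\<forall>X1\<in>Obj Gt. \<forall>X2\<in>Obj Gt. fst p X1 = fst p X2 \<longrightarrow> fst f X1 = fst f X2) \<and>
    (\<forall>a1\<in>Arr Gt. \<forall>a2\<in>Arr Gt. snd p a1 = snd p a2 \<longrightarrow> snd f a1 = snd f a2)"

definition descend :: "('ot, 'at, 'x, 'y) gmor \<Rightarrow> ('o, 'a, 'x, 'y) gmor"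
  where "descend f = (fst f \<circ> inv_into (Obj Gt) (fst p), snd f \<circ> inv_into (Arr Gt) (snd p))"

lemma descend_obj:
  assumes f: "fibrewise_constant f" and X: "X \<in> Obj Gt"
  shows "fst (descend f) (fst p X) = fst f X"
proof -
  let ?X = "inv_into (Obj Gt) (fst p) (fst p X)"
  have "fst p X \<in> fst p ` Obj Gt" using X by (rule imageI)
  then have "?X \<in> Obj Gt" "fst p ?X = fst p X" by (rule inv_into_into, rule f_inv_into_f)
  then have "fst f ?X = fst f X" using f X unfolding fibrewise_constant_def by blast
  then show ?thesis unfolding descend_def by simp
qed

lemma descend_arr:
  assumes f: "fibrewise_constant f" and a: "a \<in> Arr Gt"
  shows "snd (descend f) (snd p a) = snd f a"
proof -
  let ?a = "inv_into (Arr Gt) (snd p) (snd p a)"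
  have "snd p a \<in> snd p ` Arr Gt" using a by (rule imageI)
  then have "?a \<in> Arr Gt" "snd p ?a = snd p a" by (rule inv_into_into, rule f_inv_into_f)
  then have "snd f ?a = snd f a" using f a unfolding fibrewise_constant_def by blast
  then show ?thesis unfolding descend_def by simp
qed

lemma gmor_eq_descend: "fibrewise_constant f \<Longrightarrow> gmor_eq Gt (gcomp (descend f) p) f"
  unfolding gmor_eq_def gcomp_def by (simp add: descend_obj descend_arr)

end

locale connected_cov = covering Gt G p
  for Gt :: "('ot, 'at) groupoid" and G :: "('o, 'a) groupoid" and p +
  assumes connected_total: "connected_groupoid Gt" and connected_base: "connected_groupoid G"
begin

lemma connecting_arr: "X \<in> Obj Gt \<Longrightarrow> Y \<in> Obj Gt \<Longrightarrow> \<exists>g\<in>Arr Gt. dom Gt g = X \<and> cod Gt g = Y"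
  using connected_total unfolding connected_groupoid_def by auto

definition connecting :: "'ot \<Rightarrow> 'ot \<Rightarrow> 'at"
  where "connecting X0 Z = (SOME a. a \<in> Arr Gt \<and> dom Gt a = Z \<and> cod Gt a = X0)"

lemma connecting:
  "X0 \<in> Obj Gt \<Longrightarrow> Z \<in> Obj Gt \<Longrightarrow>
   connecting X0 Z \<in> Arr Gt \<and> dom Gt (connecting X0 Z) = Z \<and> cod Gt (connecting X0 Z) = X0"
  unfolding connecting_def by (rule someI_ex) (use connecting_arr in blast)

lemma obj_surj: "X \<in> Obj G \<Longrightarrow> X \<in> fst p ` Obj Gt"
proof -
  assume X: "X \<in> Obj G"
  obtain X0 where X0: "X0 \<in> Obj Gt" using connected_total unfolding connected_groupoid_def by auto
  then obtain g where g: "g \<in> Arr G" "dom G g = X" "cod G g = fst p X0"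
    using connected_base X unfolding connected_groupoid_def by (meson map_obj)
  then show ?thesis using lift(1)[OF X0 g(1,3)] lift_dom[OF X0 g(1,3)] by (metis S.arr_dom image_eqI)
qed

lemma arr_surj: "g \<in> Arr G \<Longrightarrow> g \<in> snd p ` Arr Gt"
proof -
  assume g: "g \<in> Arr G"
  then obtain Y where "Y \<in> Obj Gt" "cod G g = fst p Y" using obj_surj[of "cod G g"] by auto
  then show ?thesis using lift[of Y g] g by (metis image_eqI)
qed

lemma deck_eq_id_if_fixes_obj:
  assumes h: "gmorphism Gt Gt h" and hp: "gmor_eq Gt (gcomp p h) p"
    and X0: "X0 \<in> Obj Gt" and fixes_X0: "fst h X0 = X0"
  shows "\<forall>Z\<in>Obj Gt. fst h Z = Z" "\<forall>k\<in>Arr Gt. snd h k = k"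
proof -
  interpret H: gpd_hom Gt Gt h by (rule gpd_hom.intro[OF h])
  have proj: "snd p (snd h k) = snd p k" if "k \<in> Arr Gt" for k
    using hp that unfolding gmor_eq_def gcomp_def by auto
  show obj: "\<forall>Z\<in>Obj Gt. fst h Z = Z"
  proof
    fix Z assume "Z \<in> Obj Gt"
    then obtain a where a: "a \<in> Arr Gt" "dom Gt a = Z" "cod Gt a = X0" using connecting_arr X0 by blast
    have "snd h a = a" using a proj[OF a(1)] fixes_X0 by (intro lift_unique) simp_all
    then show "fst h Z = Z" using a H.map_dom by metis
  qed
  show "\<forall>k\<in>Arr Gt. snd h k = k"
    using proj obj by (auto intro: lift_unique)
qed

lemma factorization_unique:
  assumes "gmorphism G K f1" "gmorphism G K f2"
    and "gmor_eq Gt (gcomp f1 p) f" "gmor_eq Gt (gcomp f2 p) f"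
  shows "gmor_eq G f1 f2"
  using assms obj_surj arr_surj unfolding gmor_eq_def gcomp_def by fastforce

lemma gmorphism_descend:
  assumes fm: "gmorphism Gt K f" and f: "fibrewise_constant f"
  shows "gmorphism G K (descend f)"
proof -
  interpret F: gpd_hom Gt K f by (rule gpd_hom.intro[OF fm])
  note obj = descend_obj[OF f] and arr = descend_arr[OF f]
  show ?thesis
    unfolding gmorphism_def
  proof (intro conjI ballI impI)
    show "groupoid G" "groupoid K" using T.groupoid F.T.groupoid by simp_all
  next
    fix X assume "X \<in> Obj G"
    then obtain Xt where "Xt \<in> Obj Gt" "X = fst p Xt" using obj_surj by auto
    then show "fst (descend f) X \<in> Obj K" "snd (descend f) (ide G X) = ide K (fst (descend f) X)"
      using obj arr[of "ide Gt Xt"] by simp_all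
  next
    fix g assume "g \<in> Arr G"
    then obtain a where "a \<in> Arr Gt" "g = snd p a" using arr_surj by auto
    then show "snd (descend f) g \<in> Arr K" "dom K (snd (descend f) g) = fst (descend f) (dom G g)"
      "cod K (snd (descend f) g) = fst (descend f) (cod G g)"
      using obj arr by simp_all
  next
    fix g h assume gh: "g \<in> Arr G" "h \<in> Arr G" "dom G g = cod G h"
    then obtain a where a: "a \<in> Arr Gt" "g = snd p a" using arr_surj by auto
    define b where "b = lift h (dom Gt a)"
    have b: "b \<in> Arr Gt" "cod Gt b = dom Gt a" "h = snd p b"
      using lift[of "dom Gt a" h] a gh unfolding b_def by simp_all
    have "snd (descend f) (comp G g h) = snd (descend f) (snd p (comp Gt a b))" using a b by simp
    also have "\<dots> = snd f (comp Gt a b)" using a b by (intro arr) simp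
    also have "\<dots> = comp K (snd f a) (snd f b)" using a b by simp
    also have "\<dots> = comp K (snd (descend f) g) (snd (descend f) h)" using arr a b by simp
    finally show "snd (descend f) (comp G g h) = comp K (snd (descend f) g) (snd (descend f) h)" .
  qed
qed

end

locale regular_cov = connected_cov Gt G p
  for Gt :: "('ot, 'at) groupoid" and G :: "('o, 'a) groupoid" and p +
  assumes regular: "regular_covering Gt G p"
begin

lemma vertex_group_image_subset:
  assumes X0: "X0 \<in> Obj Gt" and Y0: "Y0 \<in> Obj Gt" and fibre: "fst p X0 = fst p Y0"
  shows "snd p ` vertex_group Gt X0 \<subseteq> snd p ` vertex_group Gt Y0"
proof
  fix x assume "x \<in> snd p ` vertex_group Gt X0"
  then obtain n where n: "n \<in> Arr Gt" "dom Gt n = X0" "cod Gt n = X0" "x = snd p n"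
    unfolding vertex_group_def by auto
  obtain c where c: "c \<in> Arr Gt" "dom Gt c = X0" "cod Gt c = Y0" using connecting_arr X0 Y0 by blast
  define m where "m = comp Gt c (comp Gt n (inv Gt c))"
  have m: "m \<in> vertex_group Gt Y0" using c n unfolding m_def vertex_group_def by simp
  have h: "inv G (snd p c) \<in> vertex_group G (fst p Y0)" using c fibre unfolding vertex_group_def by simp
  have "normal_in G (snd p ` vertex_group Gt Y0) (fst p Y0)"
    using regular Y0 unfolding regular_covering_def by blast
  then have "comp G (inv G (snd p c)) (comp G (snd p m) (inv G (inv G (snd p c))))
      \<in> snd p ` vertex_group Gt Y0"
    using h m unfolding normal_in_def by blast
  moreover have "comp G (inv G (snd p c)) (comp G (snd p m) (inv G (inv G (snd p c)))) = x"
    unfolding m_def using c n fibre by simp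
  ultimately show "x \<in> snd p ` vertex_group Gt Y0" by simp
qed

text \<open>
  The covering transformation sending \<open>X0\<close> to \<open>Y0\<close>: \<open>Z\<close> goes to the source of the lift at \<open>Y0\<close>
  of the image of an arrow \<open>Z \<rightarrow> X0\<close>.  Outside the carriers it is the identity, as
  required of the canonical representatives in \<open>Cov\<close>.
\<close>
definition deck_obj :: "'ot \<Rightarrow> 'ot \<Rightarrow> 'ot \<Rightarrow> 'ot"
  where "deck_obj X0 Y0 Z = (if Z \<in> Obj Gt then dom Gt (lift (snd p (connecting X0 Z)) Y0) else Z)"

definition deck_arr :: "'ot \<Rightarrow> 'ot \<Rightarrow> 'at \<Rightarrow> 'at"
  where "deck_arr X0 Y0 k = (if k \<in> Arr Gt then lift (snd p k) (deck_obj X0 Y0 (cod Gt k)) else k)"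

context
  fixes X0 Y0
  assumes X0: "X0 \<in> Obj Gt" and Y0: "Y0 \<in> Obj Gt" and fibre: "fst p X0 = fst p Y0"
begin

lemma lift_at_Y0:
  assumes "a \<in> Arr Gt" "cod Gt a = X0"
  shows "lift (snd p a) Y0 \<in> Arr Gt" "cod Gt (lift (snd p a) Y0) = Y0"
    "snd p (lift (snd p a) Y0) = snd p a"
  using lift[OF Y0, of "snd p a"] assms fibre by auto

text \<open>Independence of the chosen arrow \<open>Z \<rightarrow> X0\<close>; this is where regularity enters.\<close>
lemma dom_lift_at_Y0:
  assumes a: "a \<in> Arr Gt" "cod Gt a = X0"
  shows "dom Gt (lift (snd p a) Y0) = deck_obj X0 Y0 (dom Gt a)"
proof -
  define a' where "a' = connecting X0 (dom Gt a)"
  have a': "a' \<in> Arr Gt" "dom Gt a' = dom Gt a" "cod Gt a' = X0"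
    using connecting[OF X0, of "dom Gt a"] a unfolding a'_def by auto
  have "comp Gt a (inv Gt a') \<in> vertex_group Gt X0"
    using a a' unfolding vertex_group_def by simp
  then have "snd p (comp Gt a (inv Gt a')) \<in> snd p ` vertex_group Gt Y0"
    using vertex_group_image_subset[OF X0 Y0 fibre] by blast
  then obtain m where m: "m \<in> Arr Gt" "dom Gt m = Y0" "cod Gt m = Y0"
    "snd p m = snd p (comp Gt a (inv Gt a'))"
    unfolding vertex_group_def by force
  define L where "L = lift (snd p a') Y0"
  note L = lift_at_Y0[OF a'(1,3), folded L_def]
  have "lift (snd p a) Y0 = comp Gt m L"
  proof (rule lift_eqI)
    show "comp Gt m L \<in> Arr Gt" "cod Gt (comp Gt m L) = Y0" using m L by simp_all
    have "snd p (comp Gt m L) = comp G (comp G (snd p a) (inv G (snd p a'))) (snd p a')"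
      using m L a a' by simp
    also have "\<dots> = snd p a" using a a' by simp
    finally show "snd p (comp Gt m L) = snd p a" .
  qed
  then have "dom Gt (lift (snd p a) Y0) = dom Gt L" using m L by simp
  then show ?thesis unfolding deck_obj_def L_def a'_def using a by simp
qed

lemma deck_obj_closed: "Z \<in> Obj Gt \<Longrightarrow> deck_obj X0 Y0 Z \<in> Obj Gt"
  and deck_obj_proj: "Z \<in> Obj Gt \<Longrightarrow> fst p (deck_obj X0 Y0 Z) = fst p Z"
  using lift_at_Y0[of "connecting X0 Z"] lift_dom[OF Y0, of "snd p (connecting X0 Z)"]
    connecting[OF X0, of Z] fibre
  unfolding deck_obj_def by auto

lemma deck_obj_X0: "deck_obj X0 Y0 X0 = Y0"
proof -
  have "deck_obj X0 Y0 X0 = dom Gt (lift (snd p (ide Gt X0)) Y0)" using dom_lift_at_Y0[of "ide Gt X0"] X0 by simp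
  also have "\<dots> = Y0" using lift_ide[OF Y0] fibre X0 Y0 by simp
  finally show ?thesis .
qed

lemma deck_arr_closed: "k \<in> Arr Gt \<Longrightarrow> deck_arr X0 Y0 k \<in> Arr Gt"
  and cod_deck_arr: "k \<in> Arr Gt \<Longrightarrow> cod Gt (deck_arr X0 Y0 k) = deck_obj X0 Y0 (cod Gt k)"
  and deck_arr_proj: "k \<in> Arr Gt \<Longrightarrow> snd p (deck_arr X0 Y0 k) = snd p k"
  using lift[OF deck_obj_closed, of "cod Gt k" "snd p k"] deck_obj_proj[of "cod Gt k"]
  unfolding deck_arr_def by auto

lemma dom_deck_arr:
  assumes k: "k \<in> Arr Gt"
  shows "dom Gt (deck_arr X0 Y0 k) = deck_obj X0 Y0 (dom Gt k)"
proof -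
  define a where "a = connecting X0 (cod Gt k)"
  have a: "a \<in> Arr Gt" "dom Gt a = cod Gt k" "cod Gt a = X0"
    using connecting[OF X0, of "cod Gt k"] k unfolding a_def by auto
  have dom_a: "dom Gt (lift (snd p a) Y0) = deck_obj X0 Y0 (cod Gt k)"
    unfolding deck_obj_def a_def using k by simp
  have "deck_obj X0 Y0 (dom Gt k) = dom Gt (lift (snd p (comp Gt a k)) Y0)"
    using dom_lift_at_Y0[of "comp Gt a k"] a k by simp
  also have "lift (snd p (comp Gt a k)) Y0 = comp Gt (lift (snd p a) Y0) (deck_arr X0 Y0 k)"
    using a k lift_comp[OF Y0, of "snd p a" "snd p k"] fibre dom_a unfolding deck_arr_def by simp
  also have "dom Gt \<dots> = dom Gt (deck_arr X0 Y0 k)"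
    using lift_at_Y0[OF a(1,3)] dom_a deck_arr_closed[OF k] cod_deck_arr[OF k] by simp
  finally show ?thesis ..
qed

lemma deck_gmorphism: "gmorphism Gt Gt (deck_obj X0 Y0, deck_arr X0 Y0)"
  unfolding gmorphism_def
proof (intro conjI ballI impI)
  show "groupoid Gt" "groupoid Gt" using S.groupoid by simp_all
next
  fix X assume "X \<in> Obj Gt"
  then show "fst (deck_obj X0 Y0, deck_arr X0 Y0) X \<in> Obj Gt" using deck_obj_closed by simp
next
  fix g assume "g \<in> Arr Gt"
  then show "snd (deck_obj X0 Y0, deck_arr X0 Y0) g \<in> Arr Gt"
    "dom Gt (snd (deck_obj X0 Y0, deck_arr X0 Y0) g) = fst (deck_obj X0 Y0, deck_arr X0 Y0) (dom Gt g)"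
    "cod Gt (snd (deck_obj X0 Y0, deck_arr X0 Y0) g) = fst (deck_obj X0 Y0, deck_arr X0 Y0) (cod Gt g)"
    using deck_arr_closed dom_deck_arr cod_deck_arr by auto
next
  fix g f assume gf: "g \<in> Arr Gt" "f \<in> Arr Gt" "dom Gt g = cod Gt f"
  have Z: "deck_obj X0 Y0 (cod Gt g) \<in> Obj Gt" "fst p (deck_obj X0 Y0 (cod Gt g)) = fst p (cod Gt g)"
    using deck_obj_closed deck_obj_proj gf by auto
  have "deck_arr X0 Y0 (comp Gt g f) = lift (comp G (snd p g) (snd p f)) (deck_obj X0 Y0 (cod Gt g))"
    unfolding deck_arr_def using gf by simp
  also have "\<dots> = comp Gt (deck_arr X0 Y0 g) (lift (snd p f) (dom Gt (deck_arr X0 Y0 g)))"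
    using lift_comp[OF Z(1), of "snd p g" "snd p f"] gf Z unfolding deck_arr_def by simp
  also have "lift (snd p f) (dom Gt (deck_arr X0 Y0 g)) = deck_arr X0 Y0 f"
    using dom_deck_arr[OF gf(1)] gf unfolding deck_arr_def by simp
  finally show "snd (deck_obj X0 Y0, deck_arr X0 Y0) (comp Gt g f) =
      comp Gt (snd (deck_obj X0 Y0, deck_arr X0 Y0) g) (snd (deck_obj X0 Y0, deck_arr X0 Y0) f)"
    by simp
next
  fix X assume X: "X \<in> Obj Gt"
  then show "snd (deck_obj X0 Y0, deck_arr X0 Y0) (ide Gt X) = ide Gt (fst (deck_obj X0 Y0, deck_arr X0 Y0) X)"
    unfolding deck_arr_def using lift_ide[OF deck_obj_closed[OF X]] deck_obj_proj[OF X] X by simp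
qed

lemma deck_proj: "gmor_eq Gt (gcomp p (deck_obj X0 Y0, deck_arr X0 Y0)) p"
  unfolding gmor_eq_def gcomp_def using deck_obj_proj deck_arr_proj by auto

end

lemma deck_left_inverse:
  assumes X0: "X0 \<in> Obj Gt" and Y0: "Y0 \<in> Obj Gt" and fibre: "fst p X0 = fst p Y0"
  shows "\<forall>Z\<in>Obj Gt. deck_obj Y0 X0 (deck_obj X0 Y0 Z) = Z"
    "\<forall>k\<in>Arr Gt. deck_arr Y0 X0 (deck_arr X0 Y0 k) = k"
proof -
  let ?\<gamma> = "gcomp (deck_obj Y0 X0, deck_arr Y0 X0) (deck_obj X0 Y0, deck_arr X0 Y0)"
  note to_Y0 = deck_obj_closed[OF X0 Y0 fibre] deck_obj_proj[OF X0 Y0 fibre]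
    deck_arr_closed[OF X0 Y0 fibre] deck_arr_proj[OF X0 Y0 fibre]
  note to_X0 = deck_obj_closed[OF Y0 X0 fibre[symmetric]] deck_obj_proj[OF Y0 X0 fibre[symmetric]]
    deck_arr_closed[OF Y0 X0 fibre[symmetric]] deck_arr_proj[OF Y0 X0 fibre[symmetric]]
  have "gmorphism Gt Gt ?\<gamma>"
    using deck_gmorphism[OF X0 Y0 fibre] deck_gmorphism[OF Y0 X0 fibre[symmetric]] by (rule gmorphism_gcomp)
  moreover have "gmor_eq Gt (gcomp p ?\<gamma>) p"
    unfolding gmor_eq_def gcomp_def using to_Y0 to_X0 by simp
  moreover have "fst ?\<gamma> X0 = X0"
    using deck_obj_X0[OF X0 Y0 fibre] deck_obj_X0[OF Y0 X0 fibre[symmetric]] by (simp add: gcomp_def)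
  ultimately have "\<forall>Z\<in>Obj Gt. fst ?\<gamma> Z = Z" "\<forall>k\<in>Arr Gt. snd ?\<gamma> k = k"
    using deck_eq_id_if_fixes_obj[OF _ _ X0] by blast+
  then show "\<forall>Z\<in>Obj Gt. deck_obj Y0 X0 (deck_obj X0 Y0 Z) = Z"
    "\<forall>k\<in>Arr Gt. deck_arr Y0 X0 (deck_arr X0 Y0 k) = k"
    by (simp_all add: gcomp_def)
qed

lemma Cov_transitive:
  assumes X0: "X0 \<in> Obj Gt" and Y0: "Y0 \<in> Obj Gt" and fibre: "fst p X0 = fst p Y0"
  shows "\<exists>\<gamma>\<in>Cov Gt G p. fst \<gamma> X0 = Y0"
proof -
  note to_Y0 = deck_left_inverse[OF X0 Y0 fibre] deck_obj_closed[OF X0 Y0 fibre] deck_arr_closed[OF X0 Y0 fibre]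
  note to_X0 = deck_left_inverse[OF Y0 X0 fibre[symmetric]] deck_obj_closed[OF Y0 X0 fibre[symmetric]]
    deck_arr_closed[OF Y0 X0 fibre[symmetric]]
  have "bij_betw (deck_obj X0 Y0) (Obj Gt) (Obj Gt)"
    by (rule bij_betw_byWitness[where f' = "deck_obj Y0 X0"]) (use to_Y0 to_X0 in auto)
  moreover have "bij_betw (deck_arr X0 Y0) (Arr Gt) (Arr Gt)"
    by (rule bij_betw_byWitness[where f' = "deck_arr Y0 X0"]) (use to_Y0 to_X0 in auto)
  ultimately have "(deck_obj X0 Y0, deck_arr X0 Y0) \<in> Cov Gt G p"
    unfolding Cov_def giso_def using deck_gmorphism[OF X0 Y0 fibre] deck_proj[OF X0 Y0 fibre]
    by (simp add: deck_obj_def deck_arr_def)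
  then show ?thesis using deck_obj_X0[OF X0 Y0 fibre] by force
qed

lemma orbit_invariant_proj: "orbit_invariant Gt (Cov Gt G p) G p"
  unfolding orbit_invariant_def Cov_def gmor_eq_def gcomp_def using gmorphism by auto

lemma orbit_invariant_fibrewise_constant:
  assumes inv: "orbit_invariant Gt (Cov Gt G p) K f"
  shows "fibrewise_constant f"
  unfolding fibrewise_constant_def
proof (intro conjI ballI impI)
  have obj: "fst f (fst \<gamma> X) = fst f X" if "\<gamma> \<in> Cov Gt G p" "X \<in> Obj Gt" for \<gamma> X
    using inv that unfolding orbit_invariant_def by auto
  have arr: "snd f (snd \<gamma> a) = snd f a" if "\<gamma> \<in> Cov Gt G p" "a \<in> Arr Gt" for \<gamma> a
    using inv that unfolding orbit_invariant_def by auto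
  show "fst f X1 = fst f X2" if X: "X1 \<in> Obj Gt" "X2 \<in> Obj Gt" "fst p X1 = fst p X2" for X1 X2
  proof -
    obtain \<gamma> where "\<gamma> \<in> Cov Gt G p" "fst \<gamma> X1 = X2" using Cov_transitive[OF X] by blast
    then show ?thesis using obj X by metis
  qed
  show "snd f a1 = snd f a2" if a: "a1 \<in> Arr Gt" "a2 \<in> Arr Gt" "snd p a1 = snd p a2" for a1 a2
  proof -
    have "fst p (cod Gt a1) = fst p (cod Gt a2)" using a map_cod by metis
    then obtain \<gamma> where \<gamma>: "\<gamma> \<in> Cov Gt G p" "fst \<gamma> (cod Gt a1) = cod Gt a2"
      using Cov_transitive[OF S.arr_cod[OF a(1)] S.arr_cod[OF a(2)]] by blast
    then have hm: "gmorphism Gt Gt \<gamma>" and hp: "gmor_eq Gt (gcomp p \<gamma>) p"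
      unfolding Cov_def giso_def by auto
    interpret \<Gamma>: gpd_hom Gt Gt \<gamma> by (rule gpd_hom.intro[OF hm])
    have "snd \<gamma> a1 = a2"
      using hp a \<gamma>(2) unfolding gmor_eq_def gcomp_def by (intro lift_unique) auto
    then show ?thesis using arr[OF \<gamma>(1) a(1)] by simp
  qed
qed

lemma orbit_morphism_iso:
  fixes Q :: "('oq, 'aq) groupoid" and om :: "('ot, 'at, 'oq, 'aq) gmor"
  assumes inv: "orbit_invariant Gt (Cov Gt G p) Q om"
    and univ_base: "orbit_universal_at Gt (Cov Gt G p) Q om TYPE('o) TYPE('a)"
    and univ_self: "orbit_universal_at Gt (Cov Gt G p) Q om TYPE('oq) TYPE('aq)"
  shows "\<exists>u v. inverse_gmors G Q u v \<and> gmor_eq Gt (gcomp u p) om"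
proof -
  have om: "gmorphism Gt Q om" using inv unfolding orbit_invariant_def by auto
  obtain v where v: "gmorphism Q G v" "gmor_eq Gt (gcomp v om) p"
    using univ_base orbit_invariant_proj unfolding orbit_universal_at_def by blast
  define u where "u = descend om"
  have u: "gmorphism G Q u" "gmor_eq Gt (gcomp u p) om"
    using gmorphism_descend[OF om] gmor_eq_descend orbit_invariant_fibrewise_constant[OF inv]
    unfolding u_def by blast+
  have "gmor_eq G (gcomp v u) (id, id)"
  proof (rule factorization_unique)
    show "gmorphism G G (gcomp v u)" using u(1) v(1) by (rule gmorphism_gcomp)
    show "gmorphism G G (id, id)" using S.groupoid T.groupoid gmorphism_id by blast
    show "gmor_eq Gt (gcomp (gcomp v u) p) p" using u(2) v(2) unfolding gmor_eq_def gcomp_def by auto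
    show "gmor_eq Gt (gcomp (id, id) p) p" unfolding gmor_eq_def gcomp_def by auto
  qed
  moreover have "gmor_eq Q (gcomp u v) (id, id)"
  proof -
    obtain e where e: "\<And>e'. gmorphism Q Q e' \<Longrightarrow> gmor_eq Gt (gcomp e' om) om \<Longrightarrow> gmor_eq Q e' e"
      using univ_self inv unfolding orbit_universal_at_def by blast
    have "gmor_eq Q (gcomp u v) e"
      using u v gmorphism_gcomp[OF v(1) u(1)] by (intro e) (auto simp: gmor_eq_def gcomp_def)
    moreover have "gmor_eq Q (id, id) e"
      using om gmorphism_id by (intro e) (auto simp: gmor_eq_def gcomp_def gmorphism_def)
    ultimately show ?thesis unfolding gmor_eq_def by auto
  qed
  ultimately show ?thesis using u v unfolding inverse_gmors_def by blast
qed

end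

lemma regular_covI:
  "connected_covering Gt G p \<Longrightarrow> regular_covering Gt G p \<Longrightarrow> regular_cov Gt G p"
  unfolding regular_cov_def regular_cov_axioms_def connected_cov_def connected_cov_axioms_def
    covering_def connected_covering_def by blast

theorem mainTheorem10:
  fixes G :: "('o, 'a) groupoid"
    and Gt :: "('ot, 'at) groupoid"
    and Ht :: "('oh, 'ah) groupoid"
    and QG :: "('og, 'ag) groupoid"
    and QP :: "('op, 'ap) groupoid"
    and p :: "('ot, 'at, 'o, 'a) gmor"
    and r :: "('ot, 'at, 'oh, 'ah) gmor"
    and q :: "('oh, 'ah, 'o, 'a) gmor"
    and p' :: "('ot, 'at, 'og, 'ag) gmor"
    and r' :: "('ot, 'at, 'op, 'ap) gmor"
  assumes "connected_groupoid G"
    and "connected_covering Gt G p" and "connected_covering Gt Ht r" and "connected_covering Ht G q"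
    and "gmor_eq Gt (gcomp q r) p"
    and "regular_covering Gt G p" and "regular_covering Gt Ht r"
    \<comment> \<open>p' : Gt -> QG is the orbit morphism of Gamma = Cov(Gt/G)\<close>
    and "orbit_invariant Gt (Cov Gt G p) QG p'"
    and "orbit_universal_at Gt (Cov Gt G p) QG p' TYPE('o) TYPE('a)"
    and "orbit_universal_at Gt (Cov Gt G p) QG p' TYPE('ot) TYPE('at)"
    and "orbit_universal_at Gt (Cov Gt G p) QG p' TYPE('oh) TYPE('ah)"
    and "orbit_universal_at Gt (Cov Gt G p) QG p' TYPE('og) TYPE('ag)"
    and "orbit_universal_at Gt (Cov Gt G p) QG p' TYPE('op) TYPE('ap)"
    \<comment> \<open>r' : Gt -> QP is the orbit morphism of Pi = Cov(Gt/Ht)\<close>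
    and "orbit_invariant Gt (Cov Gt Ht r) QP r'"
    and "orbit_universal_at Gt (Cov Gt Ht r) QP r' TYPE('o) TYPE('a)"
    and "orbit_universal_at Gt (Cov Gt Ht r) QP r' TYPE('ot) TYPE('at)"
    and "orbit_universal_at Gt (Cov Gt Ht r) QP r' TYPE('oh) TYPE('ah)"
    and "orbit_universal_at Gt (Cov Gt Ht r) QP r' TYPE('og) TYPE('ag)"
    and "orbit_universal_at Gt (Cov Gt Ht r) QP r' TYPE('op) TYPE('ap)"
  shows "\<exists>q' :: ('op, 'ap, 'og, 'ag) gmor.
           covering_projection QP QG q' \<and> gmor_eq Gt (gcomp q' r') p' \<and>
           covering_projection Gt QG p' \<and> covering_projection Gt QP r' \<and>
           equivalent_coverings Gt QG p' Gt G p \<and>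
           equivalent_coverings Gt QP r' Gt Ht r \<and>
           equivalent_coverings QP QG q' Ht G q"
proof -
  interpret P: regular_cov Gt G p using assms(2,6) by (rule regular_covI)
  interpret R: regular_cov Gt Ht r using assms(3,7) by (rule regular_covI)
  obtain up vp where up: "inverse_gmors G QG up vp" "gmor_eq Gt (gcomp up p) p'"
    using P.orbit_morphism_iso[OF assms(8,9,12)] by blast
  obtain ur vr where ur: "inverse_gmors Ht QP ur vr" "gmor_eq Gt (gcomp ur r) r'"
    using R.orbit_morphism_iso[OF assms(14,17,19)] by blast
  note p' = P.equivalent_covering_if_base_iso[OF inverse_gmors_giso[OF up(1)] _ up(2)]
  note r' = R.equivalent_covering_if_base_iso[OF inverse_gmors_giso[OF ur(1)] _ ur(2)]
  define q' where "q' = gcomp up (gcomp q vr)"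
  have "covering_projection QP QG q'"
    unfolding q'_def using assms(4) inverse_gmors_giso[OF inverse_gmors_sym[OF ur(1)]]
      inverse_gmors_giso[OF up(1)]
    by (meson connected_covering_def covering_projection_gcomp giso_covering_projection)
  moreover have "gmor_eq Gt (gcomp q' r') p'"
  proof -
    have "\<forall>X\<in>Obj Gt. fst r' X = fst ur (fst r X)" "\<forall>g\<in>Arr Gt. snd r' g = snd ur (snd r g)"
      using ur(2) unfolding gmor_eq_def gcomp_def by simp_all
    then show ?thesis
      using ur(1) assms(5) up(2) unfolding q'_def inverse_gmors_def gmor_eq_def gcomp_def by auto
  qed
  moreover have "equivalent_coverings QP QG q' Ht G q"
  proof -
    have "gmor_eq Ht (gcomp q' ur) (gcomp up q)"
      using ur(1) unfolding q'_def inverse_gmors_def gmor_eq_def gcomp_def by auto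
    then show ?thesis
      unfolding equivalent_coverings_def using inverse_gmors_giso[OF ur(1)] inverse_gmors_giso[OF up(1)] by blast
  qed
  ultimately show ?thesis
    using p' r' assms(8,14) unfolding orbit_invariant_def by blast
qed

end
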